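(* Let $a=a_1+a_2$ be a generalized core-EP decomposition of $a$ (i.e. $a_1^*a_2=a_2a_1=0$, $a_1$ is core invertible and $a_2\in\mathcal{A}^{qnil}$), and let $p=aa^{\mathrm{gcEP}}$. Then $a=\begin{pmatrix} t_1&t_2\\ 0&a_2\end{pmatrix}_p$, where $t_1\in (p\mathcal{A}p)^{-1}$, $a_2\in [(1-p)\mathcal{A}(1-p)]^{qnil}$. For any $b\in \mathcal{A}^{\mathrm{gcEP}}$, we have $a\leq^{\mathrm{gcEP}}b$ if and only if $b=\begin{pmatrix} t_1&t_2\\ 0&c\end{pmatrix}_p$, where $c\in (1-p)\mathcal{A}(1-p)$.
   Context: $\mathcal{A}$ is a complex Banach *-algebra with identity; $\mathcal{A}^{qnil}$ is the set of quasinilpotent elements. An element $a$ is core invertible if there is $x$ with $a=axa$, $x\mathcal{A}=a\mathcal{A}$, $\mathcal{A}x=\mathcal{A}a^*$. An element $a$ has a generalized core-EP inverse if there is $x$ with $x=ax^2$, $(ax)^*=ax$, $\lim_{n\to\infty}\|a^n-xa^{n+1}\|^{1/n}=0$; this $x$ is unique, denoted $a^{\mathrm{gcEP}}$, and $\mathcal{A}^{\mathrm{gcEP}}$ is the set of such $a$ ($a\in\mathcal{A}^{\mathrm{gcEP}}$ iff $a$ has a generalized core-EP decomposition). For $a,b\in\mathcal{A}^{\mathrm{gcEP}}$, the generalized core-EP order is $a\leq^{\mathrm{gcEP}}b$ iff $aa^{\mathrm{gcEP}}=ba^{\mathrm{gcEP}}$ and $a^{\mathrm{gcEP}}a=a^{\mathrm{gcEP}}b$.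 For a projection $p$, $x=\begin{pmatrix} pxp&px(1-p)\\ (1-p)xp&(1-p)x(1-p)\end{pmatrix}_p$. *)

theory Defs
  imports "HOL-Analysis.Analysis"
begin

class banach_star_algebra = real_normed_algebra_1 + banach +
  fixes scaleC :: "complex \<Rightarrow> 'a \<Rightarrow> 'a"
    and adj :: "'a \<Rightarrow> 'a"
  assumes scaleC_of_real: "scaleC (complex_of_real r) x = scaleR r x"
    and scaleC_add_right: "scaleC c (x + y) = scaleC c x + scaleC c y"
    and scaleC_add_left: "scaleC (c + d) x = scaleC c x + scaleC d x"
    and scaleC_scaleC: "scaleC c (scaleC d x) = scaleC (c * d) x"
    and scaleC_one: "scaleC 1 x = x"
    and scaleC_mult_left: "scaleC c (x * y) = scaleC c x * y"
    and scaleC_mult_right: "scaleC c (x * y) = x * scaleC c y"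
    and norm_scaleC: "norm (scaleC c x) = cmod c * norm x"
    and adj_adj: "adj (adj x) = x"
    and adj_add: "adj (x + y) = adj x + adj y"
    and adj_mult: "adj (x * y) = adj y * adj x"
    and adj_scaleC: "adj (scaleC c x) = scaleC (cnj c) (adj x)"

text \<open>Quasinilpotent elements (spectral radius formula: r(a) = 0).\<close>
definition qnil :: "'a::banach_star_algebra \<Rightarrow> bool" where
  "qnil a \<longleftrightarrow> (\<lambda>n. root n (norm (a ^ n))) \<longlonglongrightarrow> 0"

definition core_invertible :: "'a::banach_star_algebra \<Rightarrow> bool" where
  "core_invertible a \<longleftrightarrow> (\<exists>x. a = a * x * a \<and> range (\<lambda>y. x * y) = range (\<lambda>y. a * y)
      \<and> range (\<lambda>y. y * x) = range (\<lambda>y. y * adj a))"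

definition is_gcEP_inverse :: "'a::banach_star_algebra \<Rightarrow> 'a \<Rightarrow> bool" where
  "is_gcEP_inverse a x \<longleftrightarrow> x = a * x ^ 2 \<and> adj (a * x) = a * x
      \<and> (\<lambda>n. root n (norm (a ^ n - x * a ^ (n + 1)))) \<longlonglongrightarrow> 0"

definition has_gcEP :: "'a::banach_star_algebra \<Rightarrow> bool" where
  "has_gcEP a \<longleftrightarrow> (\<exists>x. is_gcEP_inverse a x)"

definition gcEP :: "'a::banach_star_algebra \<Rightarrow> 'a" where
  "gcEP a = (THE x. is_gcEP_inverse a x)"

definition gcEP_le :: "'a::banach_star_algebra \<Rightarrow> 'a \<Rightarrow> bool" where
  "gcEP_le a b \<longleftrightarrow> a * gcEP a = b * gcEP a \<and> gcEP a * a = gcEP a * b"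

definition gcEP_decomposition :: "'a::banach_star_algebra \<Rightarrow> 'a \<Rightarrow> 'a \<Rightarrow> bool" where
  "gcEP_decomposition a a1 a2 \<longleftrightarrow> a = a1 + a2 \<and> adj a1 * a2 = 0 \<and> a2 * a1 = 0
      \<and> core_invertible a1 \<and> qnil a2"

definition corner :: "'a::banach_star_algebra \<Rightarrow> 'a set" where
  "corner q = {q * x * q | x. True}"

definition corner_inv :: "'a::banach_star_algebra \<Rightarrow> 'a set" where
  "corner_inv q = {t \<in> corner q. \<exists>y \<in> corner q. t * y = q \<and> y * t = q}"

text \<open>Quasinilpotent elements of qAq (the norm of qAq is the restricted norm).\<close>
definition corner_qnil :: "'a::banach_star_algebra \<Rightarrow> 'a set" where
  "corner_qnil q = {t \<in> corner q. qnil t}"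

text \<open>x = (x11 x12; x21 x22)_p, matrix representation w.r.t. the projection p.\<close>
definition pmatrix :: "'a::banach_star_algebra \<Rightarrow> 'a \<Rightarrow> 'a \<Rightarrow> 'a \<Rightarrow> 'a \<Rightarrow> 'a \<Rightarrow> bool" where
  "pmatrix p x x11 x12 x21 x22 \<longleftrightarrow> p * x * p = x11 \<and> p * x * (1 - p) = x12
      \<and> (1 - p) * x * p = x21 \<and> (1 - p) * x * (1 - p) = x22"

end

theory Submission imports Defs begin

text \<open>Let x be the core inverse of a1. The conditions a1* a2 = 0 and a2 a1 = 0 make a2 annihilate x
 on both sides, so a^n - x a^(n+1) = (1 - x a1) a2^n, whose n-th roots of norms tend to 0 because a2
 is quasinilpotent; hence x is the generalized core-EP inverse of a. With p = a x, the relations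
 x a x = x, a x^2 = x, x a^2 x = a x and p a = a1 show that (1 - p) a p = 0, that
 (1 - p) a (1 - p) = a2, and that x is the inverse of t1 = p a p in pAp. They also turn both
 a x = b x, x a = x b and the triangular form of b into p b = p a, b p = p a p.\<close>

lemma root_tendsto_zero_bound_imp_zero:
  fixes c :: "'a::real_normed_vector"
  assumes lim: "(\<lambda>n. root n (r n)) \<longlonglongrightarrow> 0" and r_nonneg: "\<And>n. 0 \<le> r n"
    and bound: "\<And>n. norm c \<le> r n * B ^ (n + 1)" and "0 \<le> B"
  shows "c = 0"
proof -
  define e where "e = 1 / (2 * (B + 1))"
  have "0 < e" and eB: "e * B \<le> 1/2"
    using \<open>0 \<le> B\<close> by (simp_all add: e_def field_simps)
  have "eventually (\<lambda>n. root n (r n) < e) sequentially"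
    using lim \<open>0 < e\<close> by (rule order_tendstoD(2))
  then obtain N where N: "\<And>n. n \<ge> N \<Longrightarrow> root n (r n) < e"
    by (auto simp: eventually_sequentially)
  have geometric: "norm c \<le> B * (1/2) ^ n" if "n \<ge> Suc N" for n
  proof -
    have "r n = root n (r n) ^ n"
      using real_root_pow_pos2[OF _ r_nonneg[of n]] that by simp
    also have "\<dots> \<le> e ^ n"
      by (rule power_mono) (use N[of n] that real_root_ge_zero[OF r_nonneg[of n]] in auto)
    finally have "r n \<le> e ^ n" .
    then have "norm c \<le> e ^ n * B ^ (n + 1)"
      using bound[of n] \<open>0 \<le> B\<close> by (meson mult_right_mono order_trans zero_le_power)
    also have "\<dots> = B * (e * B) ^ n" by (simp add: power_mult_distrib)
    also have "\<dots> \<le> B * (1/2) ^ n"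
      by (rule mult_left_mono[OF power_mono]) (use \<open>0 < e\<close> \<open>0 \<le> B\<close> eB in auto)
    finally show ?thesis .
  qed
  have "(\<lambda>n. B * (1/2::real) ^ n) \<longlonglongrightarrow> B * 0"
    by (intro tendsto_mult tendsto_const LIMSEQ_power_zero) auto
  then have "norm c \<le> B * 0"
    by (rule tendsto_le[OF sequentially_bot _ tendsto_const])
       (auto simp: eventually_sequentially intro!: exI[of _ "Suc N"] geometric)
  then show ?thesis by simp
qed

lemma root_norm_mult_power_tendsto_zero:
  fixes u a :: "'a::real_normed_algebra_1"
  assumes "(\<lambda>n. root n (norm (a ^ n))) \<longlonglongrightarrow> 0"
  shows "(\<lambda>n. root n (norm (u * a ^ n))) \<longlonglongrightarrow> 0"
proof (rule tendsto_sandwich)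
  show "\<forall>\<^sub>F n in sequentially. 0 \<le> root n (norm (u * a ^ n))"
    by (simp add: real_root_ge_zero)
  show "\<forall>\<^sub>F n in sequentially.
          root n (norm (u * a ^ n)) \<le> root n (norm u + 1) * root n (norm (a ^ n))"
    unfolding eventually_sequentially
  proof (intro exI[of _ 1] allI impI)
    fix n :: nat assume "1 \<le> n"
    have "norm (u * a ^ n) \<le> (norm u + 1) * norm (a ^ n)"
      by (rule order_trans[OF norm_mult_ineq mult_right_mono]) auto
    then show "root n (norm (u * a ^ n)) \<le> root n (norm u + 1) * root n (norm (a ^ n))"
      using \<open>1 \<le> n\<close> by (simp add: real_root_mult[symmetric] real_root_le_mono)
  qed
  have "(\<lambda>n. root n (norm u + 1) * root n (norm (a ^ n))) \<longlonglongrightarrow> 1 * 0"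
    by (intro tendsto_mult assms LIMSEQ_root_const) (simp add: add_nonneg_pos)
  then show "(\<lambda>n. root n (norm u + 1) * root n (norm (a ^ n))) \<longlonglongrightarrow> 0" by simp
qed simp

lemma power_mult_power_Suc_eq:
  fixes a x :: "'a::ring_1"
  assumes "x = a * x ^ 2"
  shows "a ^ n * x ^ (n + 1) = x"
proof (induction n)
  case (Suc n)
  have "x ^ (Suc n + 1) = x ^ 2 * x ^ n"
    by (simp add: power_add[symmetric])
  then have "a ^ Suc n * x ^ (Suc n + 1) = a ^ n * (a * x ^ 2) * x ^ n"
    by (simp only: power_Suc2[of a n] mult.assoc)
  also have "\<dots> = a ^ n * x ^ (n + 1)"
    using assms by (simp add: mult.assoc power_commutes)
  finally show ?case using Suc by simp
qed simp

lemma gcEP_inverse_absorb: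
  fixes a x y :: "'a::real_normed_algebra_1"
  assumes y: "y = a * y ^ 2"
    and lim: "(\<lambda>n. root n (norm (a ^ n - x * a ^ (n + 1)))) \<longlonglongrightarrow> 0"
  shows "x * a * y = y"
proof -
  have "y - x * a * y = 0"
  proof (rule root_tendsto_zero_bound_imp_zero[OF lim norm_ge_zero _ norm_ge_zero])
    fix n
    have "y - x * a * y = a ^ n * y ^ (n + 1) - x * a * (a ^ n * y ^ (n + 1))"
      using power_mult_power_Suc_eq[OF y, of n] by simp
    also have "\<dots> = (a ^ n - x * a ^ (n + 1)) * y ^ (n + 1)"
      by (simp add: algebra_simps power_commutes)
    finally have "norm (y - x * a * y) = norm ((a ^ n - x * a ^ (n + 1)) * y ^ (n + 1))"
      by simp
    also have "\<dots> \<le> norm (a ^ n - x * a ^ (n + 1)) * norm (y ^ (n + 1))"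
      by (rule norm_mult_ineq)
    also have "\<dots> \<le> norm (a ^ n - x * a ^ (n + 1)) * norm y ^ (n + 1)"
      by (rule mult_left_mono[OF norm_power_ineq]) simp
    finally show "norm (y - x * a * y) \<le> norm (a ^ n - x * a ^ (n + 1)) * norm y ^ (n + 1)" .
  qed
  then show ?thesis by simp
qed

lemma is_gcEP_inverse_unique:
  fixes a x y :: "'a::banach_star_algebra"
  assumes "is_gcEP_inverse a x" and "is_gcEP_inverse a y"
  shows "x = y"
proof -
  have x: "x = a * x ^ 2" "adj (a * x) = a * x"
    "(\<lambda>n. root n (norm (a ^ n - x * a ^ (n + 1)))) \<longlonglongrightarrow> 0"
    and y: "y = a * y ^ 2" "adj (a * y) = a * y"
    "(\<lambda>n. root n (norm (a ^ n - y * a ^ (n + 1)))) \<longlonglongrightarrow> 0"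
    using assms unfolding is_gcEP_inverse_def by auto
  have xay: "x * a * y = y" and yax: "y * a * x = x"
    using gcEP_inverse_absorb x(1,3) y(1,3) by blast+
  have "a * y = adj (a * y)" using y(2) by simp
  also have "\<dots> = adj ((a * x) * (a * y))" using xay by (simp add: mult.assoc)
  also have "\<dots> = (a * y) * (a * x)" using x(2) y(2) by (simp add: adj_mult)
  also have "\<dots> = a * x" using yax by (simp add: mult.assoc)
  finally have "a * y = a * x" .
  then show "x = y"
    using xay yax by (metis mult.assoc)
qed

lemma gcEP_eqI: "is_gcEP_inverse a x \<Longrightarrow> gcEP a = x"
  unfolding gcEP_def by (blast intro: is_gcEP_inverse_unique)

lemma core_invertibleE:
  fixes a :: "'a::banach_star_algebra"
  assumes "core_invertible a"
  obtains x w where "a * x * a = a" "x * a * x = x" "adj (a * x) = a * x"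
    "a * x * x = x" "x * a * a = a" "x = w * adj a"
proof -
  obtain x where x: "a = a * x * a" and right: "range ((*) x) = range ((*) a)"
    and left: "range (\<lambda>y. y * x) = range (\<lambda>y. y * adj a)"
    using assms unfolding core_invertible_def by blast
  have "x \<in> range ((*) a)" and "a \<in> range ((*) x)"
    using right by (metis mult_1_right rangeI)+
  then obtain u v where u: "x = a * u" and v: "a = x * v" by blast
  have "x \<in> range (\<lambda>y. y * adj a)"
    using left by (metis mult_1_left rangeI)
  then obtain w where w: "x = w * adj a" by blast
  have "adj a = adj a * adj x * adj a"
    using arg_cong[OF x, of adj] by (simp add: adj_mult mult.assoc)
  then have "w * adj a = w * adj a * (adj x * adj a)"
    by (metis mult.assoc)
  then have "x = x * adj (a * x)"
    using w by (simp add: adj_mult)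
  then have "a * x = (a * x) * adj (a * x)"
    by (simp add: mult.assoc)
  then have herm: "adj (a * x) = a * x"
    by (metis adj_adj adj_mult)
  have "adj a * (a * x) = adj a * adj (a * x)"
    using herm by simp
  also have "\<dots> = adj (a * x * a)"
    by (simp add: adj_mult)
  finally have xax: "x * a * x = x"
    using w x by (simp add: mult.assoc)
  have "a * x * x = a * x * a * u" using u by (simp add: mult.assoc)
  then have axx: "a * x * x = x" using x u by simp
  have "x * a * a = x * a * x * v" using v by (simp add: mult.assoc)
  then have xaa: "x * a * a = a" using xax v by simp
  show ?thesis
    using that x[symmetric] xax herm axx xaa w by blast
qed

lemma mult_power_add_eq_power_Suc:
  fixes b c :: "'a::ring_1"
  assumes "b * c = 0"
  shows "b * (c + b) ^ n = b ^ Suc n"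
proof (induction n)
  case (Suc n)
  have "b * (c + b) ^ Suc n = (b * c + b * b) * (c + b) ^ n"
    by (simp add: algebra_simps)
  also have "\<dots> = b * (b * (c + b) ^ n)"
    using assms by (simp add: mult.assoc)
  finally show ?case using Suc by simp
qed simp

lemma is_gcEP_inverse_of_decomposition:
  fixes a a1 a2 x :: "'a::banach_star_algebra"
  assumes a: "a = a1 + a2" and "qnil a2" and "a2 * a1 = 0"
    and x: "a1 * x * x = x" "x * a1 * a1 = a1" "adj (a1 * x) = a1 * x"
    and annihilate: "x * a2 = 0" "a2 * x = 0"
  shows "is_gcEP_inverse a x"
proof -
  have ax: "a * x = a1 * x" and xa: "x * a = x * a1"
    using a annihilate by (simp_all add: distrib_left distrib_right)
  define u where "u = 1 - x * a1"
  have ua: "u * a = u * a2"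
    using a x(2) unfolding u_def by (simp add: algebra_simps)
  have u_power: "u * a ^ n = u * a2 ^ n" for n
  proof (cases n)
    case (Suc m)
    have "u * a ^ n = u * a * a ^ m" using Suc by (simp add: mult.assoc)
    also have "\<dots> = u * (a2 * a ^ m)" using ua by (simp add: mult.assoc)
    also have "\<dots> = u * a2 ^ n"
      using mult_power_add_eq_power_Suc[OF \<open>a2 * a1 = 0\<close>, folded a] Suc by simp
    finally show ?thesis .
  qed simp
  have "x * a ^ (n + 1) = x * a1 * a ^ n" for n
    using xa by (simp add: mult.assoc[symmetric])
  then have "a ^ n - x * a ^ (n + 1) = u * a ^ n" for n
    unfolding u_def by (simp add: left_diff_distrib)
  then have "(\<lambda>n. root n (norm (a ^ n - x * a ^ (n + 1)))) \<longlonglongrightarrow> 0"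
    using root_norm_mult_power_tendsto_zero \<open>qnil a2\<close> u_power unfolding qnil_def by simp
  moreover have "x = a * x ^ 2"
    using ax x(1) by (simp add: power2_eq_square mult.assoc[symmetric])
  ultimately show ?thesis
    using ax x(3) unfolding is_gcEP_inverse_def by simp
qed

lemma gcEP_decomposition_gcEP:
  fixes a a1 a2 :: "'a::banach_star_algebra"
  assumes "gcEP_decomposition a a1 a2"
  obtains x where "gcEP a = x" "x * a * x = x" "a * x * x = x" "x * a * a * x = a * x"
    "a * x * a = a1"
proof -
  have a: "a = a1 + a2" and "adj a1 * a2 = 0" "a2 * a1 = 0" "core_invertible a1" "qnil a2"
    using assms unfolding gcEP_decomposition_def by auto
  obtain x w where x: "a1 * x * a1 = a1" "x * a1 * x = x" "adj (a1 * x) = a1 * x"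
    "a1 * x * x = x" "x * a1 * a1 = a1" "x = w * adj a1"
    using core_invertibleE[OF \<open>core_invertible a1\<close>] .
  have x_a2: "x * a2 = 0"
    using x(6) \<open>adj a1 * a2 = 0\<close> by (simp add: mult.assoc)
  have "a2 * x = a2 * a1 * (x * x)"
    using x(4) by (simp add: mult.assoc)
  then have a2_x: "a2 * x = 0"
    using \<open>a2 * a1 = 0\<close> by simp
  have "gcEP a = x"
    using is_gcEP_inverse_of_decomposition[OF a \<open>qnil a2\<close> \<open>a2 * a1 = 0\<close> x(4,5,3) x_a2 a2_x]
    by (rule gcEP_eqI)
  moreover have ax: "a * x = a1 * x" and xa: "x * a = x * a1"
    using a x_a2 a2_x by (simp_all add: distrib_left distrib_right)
  moreover have "x * a * a * x = a * x"
    using xa ax a a2_x x(5) by (simp add: distrib_left distrib_right mult.assoc)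
  moreover have "a * x * a = a1"
    using ax a x_a2 x(1) by (simp add: distrib_left mult.assoc)
  ultimately show ?thesis
    using that x(2,4) by (metis mult.assoc)
qed

lemma compression_in_corner_inv:
  fixes a x :: "'a::banach_star_algebra"
  assumes "x * a * x = x" "a * x * x = x" "x * a * a * x = a * x"
  defines "p \<equiv> a * x"
  shows "p * a * p \<in> corner_inv p"
proof -
  have "x \<in> corner p"
    using assms unfolding corner_def by (auto intro!: exI[of _ x] simp: mult.assoc)
  moreover have "p * a * p * x = p" and "x * (p * a * p) = p"
    using assms by (simp_all add: mult.assoc)
  ultimately show ?thesis
    unfolding corner_inv_def corner_def by blast
qed

lemma gcEP_relations_iff_projection:
  fixes a b x :: "'a::ring_1"
  assumes "x * a * x = x" "a * x * x = x" "x * a * a * x = a * x"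
  defines "p \<equiv> a * x"
  shows "(a * x = b * x \<and> x * a = x * b) \<longleftrightarrow> (p * b = p * a \<and> b * p = p * a * p)"
proof -
  have xp: "x * p = x" and px: "p * x = x" and xap: "x * a * p = p"
    using assms by (simp_all add: mult.assoc)
  show ?thesis
  proof
    assume "a * x = b * x \<and> x * a = x * b"
    then show "p * b = p * a \<and> b * p = p * a * p"
      using xap unfolding p_def by (metis mult.assoc)
  next
    assume "p * b = p * a \<and> b * p = p * a * p"
    then show "a * x = b * x \<and> x * a = x * b"
      using xp px unfolding p_def by (metis mult.assoc)
  qed
qed

lemma pmatrix_upper_triangular_iff:
  fixes p a b :: "'a::banach_star_algebra"
  assumes "p * p = p"
  shows "(\<exists>c \<in> corner (1 - p). pmatrix p b (p * a * p) (p * a * (1 - p)) 0 c)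
    \<longleftrightarrow> p * b = p * a \<and> b * p = p * a * p"
proof
  assume "\<exists>c \<in> corner (1 - p). pmatrix p b (p * a * p) (p * a * (1 - p)) 0 c"
  then have blocks: "p * b * p = p * a * p" "p * b * (1 - p) = p * a * (1 - p)"
    "(1 - p) * b * p = 0"
    unfolding pmatrix_def by auto
  have "p * b = p * b * p + p * b * (1 - p)" by (simp add: algebra_simps)
  also have "\<dots> = p * a * p + p * a * (1 - p)" using blocks by simp
  also have "\<dots> = p * a" by (simp add: algebra_simps)
  finally have "p * b = p * a" .
  have "b * p = p * b * p + (1 - p) * b * p" by (simp add: algebra_simps)
  with blocks \<open>p * b = p * a\<close> show "p * b = p * a \<and> b * p = p * a * p" by simp
next
  assume "p * b = p * a \<and> b * p = p * a * p"
  then have "p * b * p = p * a * p" "p * b * (1 - p) = p * a * (1 - p)"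
    and "(1 - p) * b * p = (1 - p) * p * a * p"
    by (simp_all add: mult.assoc)
  moreover have "(1 - p) * p = 0"
    using assms by (simp add: algebra_simps)
  ultimately have "pmatrix p b (p * a * p) (p * a * (1 - p)) 0 ((1 - p) * b * (1 - p))"
    unfolding pmatrix_def by simp
  then show "\<exists>c \<in> corner (1 - p). pmatrix p b (p * a * p) (p * a * (1 - p)) 0 c"
    unfolding corner_def by blast
qed

theorem lemma4p2:
  fixes a a1 a2 p :: "'a::banach_star_algebra"
  assumes "gcEP_decomposition a a1 a2"
    and "p = a * gcEP a"
  shows "\<exists>t1 t2. pmatrix p a t1 t2 0 a2 \<and> t1 \<in> corner_inv p \<and> a2 \<in> corner_qnil (1 - p)
    \<and> (\<forall>b::'a. has_gcEP b \<longrightarrow>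
          (gcEP_le a b \<longleftrightarrow> (\<exists>c \<in> corner (1 - p). pmatrix p b t1 t2 0 c)))"
proof -
  obtain x where x: "gcEP a = x" "x * a * x = x" "a * x * x = x" "x * a * a * x = a * x"
    and a1: "a * x * a = a1"
    using gcEP_decomposition_gcEP[OF assms(1)] .
  have p: "p = a * x" using assms(2) x(1) by simp
  have "p * p = p" using p x(2) by (simp add: mult.assoc)
  note triangular = pmatrix_upper_triangular_iff[OF this]
  have "a = a1 + a2" and "qnil a2"
    using assms(1) unfolding gcEP_decomposition_def by auto
  have ap: "a * p = p * a * p"
    using p x(4) by (simp add: mult.assoc)
  have "(1 - p) * a * (1 - p) = a - p * a - (a * p - p * a * p)"
    by (simp add: algebra_simps)
  then have a2: "a2 = (1 - p) * a * (1 - p)"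
    using \<open>a = a1 + a2\<close> a1 ap p by simp
  obtain c where "pmatrix p a (p * a * p) (p * a * (1 - p)) 0 c"
    using triangular[of a a] ap by blast
  then have "pmatrix p a (p * a * p) (p * a * (1 - p)) 0 a2"
    using a2 unfolding pmatrix_def by simp
  moreover have "p * a * p \<in> corner_inv p"
    using compression_in_corner_inv[OF x(2-4)] p by simp
  moreover have "a2 \<in> corner_qnil (1 - p)"
    using a2 \<open>qnil a2\<close> unfolding corner_qnil_def corner_def by blast
  moreover have "gcEP_le a b \<longleftrightarrow> (\<exists>c \<in> corner (1 - p). pmatrix p b (p * a * p) (p * a * (1 - p)) 0 c)"
    for b
    using gcEP_relations_iff_projection[OF x(2-4), of b] triangular[of b a] p x(1)
    unfolding gcEP_le_def by auto
  ultimately show ?thesis by blast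
qed

end
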